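(* $\mathsf{SIPT}^2_2 \not\le_{\rm sc} \mathsf{D}^2_2$.
   Context: A 2-coloring of pairs is $f:[\omega]^2\to 2$, with $f(x,y)$ meaning $f(\{x,y\})$ for $x<y$; it is stable if $\lim_u f(x,u)$ exists for all $x$. $A\oplus B=\{2x:x\in A\}\cup\{2y+1:y\in B\}$. A set $H=H_L\oplus H_R$ with $H_L,H_R$ infinite is increasing p-homogeneous for $f$ if $f(x,y)$ is constant over $x\in H_L$, $y\in H_R$, $x<y$. An infinite set $H$ is limit homogeneous for $f$ if $\lim_u f(x,u)$ is the same for all $x\in H$. $\mathsf{SIPT}^2_2$ (resp. $\mathsf{D}^2_2$) is the problem whose instances are stable 2-colorings of pairs $f$ and whose solutions are the sets increasing p-homogeneous (resp. limit homogeneous) for $f$. $\mathsf P\le_{\rm sc}\mathsf Q$ (strongly computably reducible) if every instance $X$ of $\mathsf P$ computes an instance $\widehat X$ of $\mathsf Q$ such that every solution $\widehat Y$ of $\widehat X$ computes (by itself, without $X$) some solution of $X$. *)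

theory Defs
  imports Main "HOL-Library.Nat_Bijection"
begin

datatype rf = Zero | Succ | Proj nat | Oracle | Comp rf "rf list" | PrimRec rf rf | Min rf

inductive ev :: "nat set \<Rightarrow> rf \<Rightarrow> nat list \<Rightarrow> nat \<Rightarrow> bool" for A :: "nat set" where
  ev_zero: "ev A Zero xs 0"
| ev_succ: "ev A Succ (x # xs) (Suc x)"
| ev_proj: "i < length xs \<Longrightarrow> ev A (Proj i) xs (xs ! i)"
| ev_oracle: "ev A Oracle (x # xs) (if x \<in> A then 1 else 0)"
| ev_comp: "length ys = length gs \<Longrightarrow> (\<forall>i < length gs. ev A (gs ! i) xs (ys ! i))
              \<Longrightarrow> ev A f ys z \<Longrightarrow> ev A (Comp f gs) xs z"
| ev_prim0: "ev A f xs y \<Longrightarrow> ev A (PrimRec f g) (0 # xs) y"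
| ev_primS: "ev A (PrimRec f g) (n # xs) y \<Longrightarrow> ev A g (n # y # xs) z
              \<Longrightarrow> ev A (PrimRec f g) (Suc n # xs) z"
| ev_min: "ev A f (n # xs) 0 \<Longrightarrow> (\<forall>m < n. \<exists>k. ev A f (m # xs) (Suc k))
              \<Longrightarrow> ev A (Min f) xs n"

definition turing_le :: "nat set \<Rightarrow> nat set \<Rightarrow> bool" where
  "turing_le B A \<longleftrightarrow> (\<exists>e. \<forall>n. ev A e [n] (if n \<in> B then 1 else 0))"

text \<open>A problem: a predicate on instances and a solution relation, both on subsets of nat.\<close>
definition sc_reducible ::
  "(nat set \<Rightarrow> bool) \<Rightarrow> (nat set \<Rightarrow> nat set \<Rightarrow> bool) \<Rightarrow>
   (nat set \<Rightarrow> bool) \<Rightarrow> (nat set \<Rightarrow> nat set \<Rightarrow> bool) \<Rightarrow> bool" where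
  "sc_reducible PI PS QI QS \<longleftrightarrow>
     (\<forall>X. PI X \<longrightarrow> (\<exists>Xh. turing_le Xh X \<and> QI Xh \<and>
        (\<forall>Yh. QS Xh Yh \<longrightarrow> (\<exists>Y. turing_le Y Yh \<and> PS X Y))))"

text \<open>A 2-coloring of pairs f is coded as the set of codes prod_encode (x,y), x<y, with f(x,y)=1.\<close>
definition col_of :: "nat set \<Rightarrow> nat \<Rightarrow> nat \<Rightarrow> bool" where
  "col_of X x y \<longleftrightarrow> prod_encode (x, y) \<in> X"

definition coloring_code :: "nat set \<Rightarrow> bool" where
  "coloring_code X \<longleftrightarrow> X \<subseteq> {prod_encode (x, y) | x y. x < y}"

definition stable :: "(nat \<Rightarrow> nat \<Rightarrow> bool) \<Rightarrow> bool" where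
  "stable f \<longleftrightarrow> (\<forall>x. \<exists>b. \<forall>\<^sub>F u in sequentially. f x u = b)"

definition stable_instance :: "nat set \<Rightarrow> bool" where
  "stable_instance X \<longleftrightarrow> coloring_code X \<and> stable (col_of X)"

definition join :: "nat set \<Rightarrow> nat set \<Rightarrow> nat set" where
  "join A B = {2 * x | x. x \<in> A} \<union> {2 * y + 1 | y. y \<in> B}"

definition incr_p_homogeneous :: "(nat \<Rightarrow> nat \<Rightarrow> bool) \<Rightarrow> nat set \<Rightarrow> bool" where
  "incr_p_homogeneous f H \<longleftrightarrow>
     (\<exists>HL HR. H = join HL HR \<and> infinite HL \<and> infinite HR \<and>
        (\<exists>b. \<forall>x\<in>HL. \<forall>y\<in>HR. x < y \<longrightarrow> f x y = b))"

definition limit_homogeneous :: "(nat \<Rightarrow> nat \<Rightarrow> bool) \<Rightarrow> nat set \<Rightarrow> bool" where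
  "limit_homogeneous f H \<longleftrightarrow>
     infinite H \<and> (\<exists>b. \<forall>x\<in>H. \<forall>\<^sub>F u in sequentially. f x u = b)"

definition SIPT22_sol :: "nat set \<Rightarrow> nat set \<Rightarrow> bool" where
  "SIPT22_sol X H \<longleftrightarrow> incr_p_homogeneous (col_of X) H"

definition D22_sol :: "nat set \<Rightarrow> nat set \<Rightarrow> bool" where
  "D22_sol X H \<longleftrightarrow> limit_homogeneous (col_of X) H"

end

theory Submission
  imports Defs "HOL-Library.Countable" "HOL-Library.Infinite_Set"
begin

text \<open>Colour a pair x < y by 1 iff mu x \<le> y, for a fast-growing function mu fixed below. This
  colouring is stable, and every increasing p-homogeneous set HL \<oplus> HR for it has colour 1, so it is
  a spread join: mu x \<le> y whenever x \<in> HL, y \<in> HR, x < y. For an arbitrary stable colouring with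
  limit colour p we build, by Mathias forcing with two generic sets (one inside each colour of p, or
  both inside one colour if some reservoir is eventually p-monochromatic), a limit-homogeneous G
  computing no spread join.
  A requirement asks whether a finite extension can force some x \<ge> n into the left and some y into
  the right half of the join computed by a program. Either for every partition of the reservoir one
  of its two sides admits such a pair below a bound B, uniform in the partition by compactness of
  Cantor space, or some partition admits none, and the reservoir shrinks to an infinite side of it.
  In the first case the partition by p yields a forced pair with y \<le> B < mu x, which no spread join
  contains. Reservoirs are drawn from a countable family fixed in advance, independent of the given
  colouring, so one function mu dominates all these bounds.\<close>

section \<open>Oracle computations use finitely much of the oracle\<close>

inductive_cases ev_ZeroE: "ev A Zero xs z"
inductive_cases ev_SuccE: "ev A Succ xs z"
inductive_cases ev_ProjE: "ev A (Proj i) xs z"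
inductive_cases ev_OracleE: "ev A Oracle xs z"
inductive_cases ev_CompE: "ev A (Comp f gs) xs z"
inductive_cases ev_PrimRec0E: "ev A (PrimRec f g) (0 # xs) z"
inductive_cases ev_PrimRecSE: "ev A (PrimRec f g) (Suc n # xs) z"
inductive_cases ev_MinE: "ev A (rf.Min f) xs z"

lemma ev_functional: "ev A e xs y \<Longrightarrow> ev A e xs z \<Longrightarrow> y = z"
proof (induction arbitrary: z rule: ev.induct)
  case (ev_comp ys gs xs f y)
  from \<open>ev A (Comp f gs) xs z\<close> obtain ys' where len: "length ys' = length gs"
    and args: "\<forall>i<length gs. ev A (gs ! i) xs (ys' ! i)" and "ev A f ys' z"
    by (auto elim: ev_CompE)
  moreover have "ys = ys'"
    by (rule nth_equalityI) (use ev_comp.hyps(1) ev_comp.IH(1) len args in auto)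
  ultimately show ?case using ev_comp.IH(2) by blast
next
  case (ev_min f n xs)
  from \<open>ev A (rf.Min f) xs z\<close> have z: "ev A f (z # xs) 0" "\<forall>m<z. \<exists>k. ev A f (m # xs) (Suc k)"
    by (auto elim: ev_MinE)
  show ?case
  proof (rule linorder_cases)
    assume "n < z"
    with z(2) ev_min.IH(1) show ?thesis by blast
  next
    assume "z < n"
    with z(1) ev_min.IH(2) show ?thesis by blast
  qed
next
  case (ev_prim0 f xs y g)
  then show ?case by (blast elim: ev_PrimRec0E)
next
  case (ev_primS f g n xs y z')
  then show ?case by (blast elim: ev_PrimRecSE)
qed (auto elim: ev_ZeroE ev_SuccE ev_ProjE ev_OracleE)

lemma ev_char_mem:
  assumes "ev A e [n] (if n \<in> Y then 1 else 0)" and "ev A e [n] 1"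
  shows "n \<in> Y"
  using ev_functional[OF assms] by (metis zero_neq_one)

definition agree_below :: "nat \<Rightarrow> nat set \<Rightarrow> nat set \<Rightarrow> bool" where
  "agree_below k A T \<longleftrightarrow> T \<inter> {..<k} = A \<inter> {..<k}"

lemma agree_below_mono: "agree_below k A T \<Longrightarrow> j \<le> k \<Longrightarrow> agree_below j A T"
  unfolding agree_below_def by (simp add: set_eq_iff) (meson order_less_le_trans)

text \<open>P holds on a basic open neighbourhood of A in Cantor space.\<close>
definition holds_near :: "nat set \<Rightarrow> (nat set \<Rightarrow> bool) \<Rightarrow> bool" where
  "holds_near A P \<longleftrightarrow> (\<exists>k. \<forall>T. agree_below k A T \<longrightarrow> P T)"

lemma holds_near_conj:
  assumes "holds_near A P" and "holds_near A Q"
  shows "holds_near A (\<lambda>T. P T \<and> Q T)"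
proof -
  obtain k l where "\<forall>T. agree_below k A T \<longrightarrow> P T" and "\<forall>T. agree_below l A T \<longrightarrow> Q T"
    using assms unfolding holds_near_def by blast
  then show ?thesis
    unfolding holds_near_def by (metis agree_below_mono le_add1 le_add2)
qed

lemma holds_near_all_less:
  fixes n :: nat
  assumes "\<And>i. i < n \<Longrightarrow> holds_near A (P i)"
  shows "holds_near A (\<lambda>T. \<forall>i<n. P i T)"
  using assms
proof (induction n)
  case 0
  show ?case by (simp add: holds_near_def)
next
  case (Suc n)
  have "holds_near A (\<lambda>T. (\<forall>i<n. P i T) \<and> P n T)"
    using Suc by (intro holds_near_conj) simp_all
  then show ?case
    unfolding holds_near_def by (metis less_Suc_eq)
qed

lemma holds_near_mono:
  "holds_near A P \<Longrightarrow> (\<And>T. P T \<Longrightarrow> Q T) \<Longrightarrow> holds_near A Q"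
  unfolding holds_near_def by blast

lemma holds_near_always:
  "(\<And>T. P T) \<Longrightarrow> holds_near A P"
  unfolding holds_near_def by blast

lemma ev_holds_near: "ev A e xs y \<Longrightarrow> holds_near A (\<lambda>T. ev T e xs y)"
proof (induction rule: ev.induct)
  case (ev_oracle x xs)
  have "\<forall>T. agree_below (Suc x) A T \<longrightarrow> ev T Oracle (x # xs) (if x \<in> A then 1 else 0)"
  proof (intro allI impI)
    fix T assume "agree_below (Suc x) A T"
    then have "x \<in> T \<longleftrightarrow> x \<in> A" unfolding agree_below_def by blast
    then show "ev T Oracle (x # xs) (if x \<in> A then 1 else 0)" using ev.ev_oracle[of T x xs] by simp
  qed
  then show ?case unfolding holds_near_def by blast
next
  case (ev_comp ys gs xs f z)
  then have "holds_near A (\<lambda>T. (\<forall>i<length gs. ev T (gs ! i) xs (ys ! i)) \<and> ev T f ys z)"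
    by (intro holds_near_conj holds_near_all_less) auto
  then show ?case
    unfolding holds_near_def using ev_comp.hyps(1) by (blast intro: ev.ev_comp)
next
  case (ev_primS f g n xs y z)
  then have "holds_near A (\<lambda>T. ev T (PrimRec f g) (n # xs) y \<and> ev T g (n # y # xs) z)"
    by (intro holds_near_conj)
  then show ?case
    unfolding holds_near_def by (blast intro: ev.ev_primS)
next
  case (ev_min f n xs)
  have "holds_near A (\<lambda>T. \<exists>k. ev T f (m # xs) (Suc k))" if "m < n" for m
    using ev_min.IH(2) that unfolding holds_near_def by blast
  with ev_min.IH(1)
  have "holds_near A (\<lambda>T. (\<forall>m<n. \<exists>k. ev T f (m # xs) (Suc k)) \<and> ev T f (n # xs) 0)"
    by (intro holds_near_conj holds_near_all_less)
  then show ?case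
    unfolding holds_near_def by (blast intro: ev.ev_min)
next
  case (ev_prim0 f xs y g)
  then show ?case by (blast intro: holds_near_mono ev.ev_prim0)
qed (auto intro: holds_near_always ev.intros)

section \<open>Compactness of Cantor space\<close>

text \<open>Koenig's lemma for the binary tree: koenig_path Q turns, at each level, to the side on which
  infinitely many of the sets Q B still follow it.\<close>
primrec koenig_branch :: "(nat \<Rightarrow> nat set) \<Rightarrow> nat \<Rightarrow> nat set" where
  "koenig_branch Q 0 = UNIV"
| "koenig_branch Q (Suc m) =
    (if infinite {B \<in> koenig_branch Q m. m \<in> Q B} then {B \<in> koenig_branch Q m. m \<in> Q B}
     else {B \<in> koenig_branch Q m. m \<notin> Q B})"

definition koenig_path :: "(nat \<Rightarrow> nat set) \<Rightarrow> nat set" where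
  "koenig_path Q = {m. infinite {B \<in> koenig_branch Q m. m \<in> Q B}}"

lemma koenig_branch_Suc:
  "koenig_branch Q (Suc m) = {B \<in> koenig_branch Q m. m \<in> Q B \<longleftrightarrow> m \<in> koenig_path Q}"
  by (auto simp: koenig_path_def)

lemma infinite_koenig_branch: "infinite (koenig_branch Q m)"
proof (induction m)
  case (Suc m)
  show ?case
  proof (cases "m \<in> koenig_path Q")
    case True
    then show ?thesis by (simp add: koenig_branch_Suc koenig_path_def)
  next
    case False
    have "koenig_branch Q m = {B \<in> koenig_branch Q m. m \<in> Q B} \<union> {B \<in> koenig_branch Q m. m \<notin> Q B}"
      by blast
    with False Suc.IH have "infinite {B \<in> koenig_branch Q m. m \<notin> Q B}"
      unfolding koenig_path_def by (metis (no_types, lifting) finite_UnI mem_Collect_eq)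
    with False show ?thesis by (simp add: koenig_branch_Suc)
  qed
qed simp

lemma koenig_branch_agree: "B \<in> koenig_branch Q m \<Longrightarrow> agree_below m (koenig_path Q) (Q B)"
proof (induction m)
  case 0
  then show ?case by (simp add: agree_below_def)
next
  case (Suc m)
  then show ?case
    unfolding koenig_branch_Suc agree_below_def by (auto simp: lessThan_Suc)
qed

lemma infinite_agree_koenig_path: "infinite {B. agree_below m (koenig_path Q) (Q B)}"
  using infinite_koenig_branch koenig_branch_agree
  by (metis (mono_tags, lifting) infinite_super mem_Collect_eq subsetI)

lemma uniform_bound_by_compactness:
  fixes W :: "nat set \<Rightarrow> nat \<Rightarrow> bool"
  assumes mono: "\<And>P B B'. W P B \<Longrightarrow> B \<le> B' \<Longrightarrow> W P B'"
    and open_: "\<And>P B. W P B \<Longrightarrow> holds_near P (\<lambda>P'. W P' B)"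
    and bound: "\<And>P. \<exists>B. W P B"
  shows "\<exists>B. \<forall>P. W P B"
proof (rule ccontr)
  assume "\<nexists>B. \<forall>P. W P B"
  then obtain Q where Q: "\<And>B. \<not> W (Q B) B" by metis
  define P where "P = koenig_path Q"
  have P: "infinite {B. agree_below m P (Q B)}" for m
    unfolding P_def by (rule infinite_agree_koenig_path)
  obtain B0 where "W P B0" using bound by blast
  then obtain M where M: "\<forall>P'. agree_below M P P' \<longrightarrow> W P' B0"
    using open_ unfolding holds_near_def by blast
  obtain B where "agree_below M P (Q B)" and "B0 \<le> B"
    using P[of M] by (meson infinite_nat_iff_unbounded_le mem_Collect_eq)
  then have "W (Q B) B" using M mono by blast
  then show False using Q by blast
qed

section \<open>Forcing that no computable set is a spread join\<close>

lemma join_even: "2 * x \<in> join A B \<longleftrightarrow> x \<in> A"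
  unfolding join_def by (auto, presburger)

lemma join_odd: "Suc (2 * y) \<in> join A B \<longleftrightarrow> y \<in> B"
  unfolding join_def by (auto, presburger)

definition computes_spread_join :: "(nat \<Rightarrow> nat) \<Rightarrow> rf \<Rightarrow> nat set \<Rightarrow> bool" where
  "computes_spread_join f d G \<longleftrightarrow> (\<exists>HL HR. infinite HL \<and> infinite HR \<and>
     (\<forall>x\<in>HL. \<forall>y\<in>HR. x < y \<longrightarrow> f x \<le> y) \<and>
     (\<forall>n. ev G d [n] (if n \<in> join HL HR then 1 else 0)))"

lemma close_pair_prevents_spread_join:
  assumes "ev G d [2 * x] 1" and "ev G d [2 * y + 1] 1" and "x < y" and "y < f x"
  shows "\<not> computes_spread_join f d G"
proof
  assume "computes_spread_join f d G"
  then obtain HL HR where spread: "\<forall>x\<in>HL. \<forall>y\<in>HR. x < y \<longrightarrow> f x \<le> y"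
    and char: "\<forall>n. ev G d [n] (if n \<in> join HL HR then 1 else 0)"
    unfolding computes_spread_join_def by blast
  have "x \<in> HL" using ev_char_mem[OF char[rule_format] assms(1)] by (simp add: join_even)
  moreover have "y \<in> HR" using ev_char_mem[OF char[rule_format] assms(2)] by (simp add: join_odd)
  ultimately show False using spread assms(3,4) by fastforce
qed

definition pair_forceable :: "nat set \<Rightarrow> nat set \<Rightarrow> rf \<Rightarrow> nat \<Rightarrow> nat \<Rightarrow> bool" where
  "pair_forceable F S d n y \<longleftrightarrow> (\<exists>E x. finite E \<and> E \<subseteq> S \<and> n \<le> x \<and> x < y \<and>
     holds_near (F \<union> E) (\<lambda>T. ev T d [2 * x] 1 \<and> ev T d [2 * y + 1] 1))"

lemma pair_forceable_finite_use:
  assumes "pair_forceable F S d n y"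
  shows "\<exists>k. \<forall>S'. S \<inter> {..<k} \<subseteq> S' \<longrightarrow> pair_forceable F S' d n y"
proof -
  obtain E x where E: "finite E" "E \<subseteq> S"
    and rest: "n \<le> x" "x < y" "holds_near (F \<union> E) (\<lambda>T. ev T d [2 * x] 1 \<and> ev T d [2 * y + 1] 1)"
    using assms unfolding pair_forceable_def by blast
  obtain k where "E \<subseteq> {..<k}" using E(1) finite_nat_bounded by blast
  then have "\<forall>S'. S \<inter> {..<k} \<subseteq> S' \<longrightarrow> E \<subseteq> S'" using E(2) by blast
  then show ?thesis unfolding pair_forceable_def using E(1) rest by blast
qed

text \<open>(F, R) is read as a Mathias condition with finite part F and reservoir R.\<close>
definition forces_no_spread :: "(nat \<Rightarrow> nat) \<Rightarrow> rf \<Rightarrow> nat set \<Rightarrow> nat set \<Rightarrow> bool" where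
  "forces_no_spread f d F R \<longleftrightarrow> (\<forall>G. F \<subseteq> G \<longrightarrow> G - F \<subseteq> R \<longrightarrow> \<not> computes_spread_join f d G)"

lemma forces_no_spread_if_no_pair_forceable:
  assumes "\<And>y. \<not> pair_forceable F S d n y"
  shows "forces_no_spread f d F S"
  unfolding forces_no_spread_def
proof (intro allI impI notI)
  fix G assume "F \<subseteq> G" "G - F \<subseteq> S" "computes_spread_join f d G"
  then obtain HL HR where "infinite HL" "infinite HR"
    and char: "\<forall>n. ev G d [n] (if n \<in> join HL HR then 1 else 0)"
    unfolding computes_spread_join_def by blast
  obtain x where "x \<in> HL" "n \<le> x"
    using \<open>infinite HL\<close> by (meson infinite_nat_iff_unbounded_le)
  obtain y where "y \<in> HR" "Suc x \<le> y"
    using \<open>infinite HR\<close> by (meson infinite_nat_iff_unbounded_le)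
  have "ev G d [2 * x] 1" "ev G d [2 * y + 1] 1"
    using char[rule_format, of "2 * x"] char[rule_format, of "2 * y + 1"]
      \<open>x \<in> HL\<close> \<open>y \<in> HR\<close> by (simp_all add: join_even join_odd)
  then have "holds_near G (\<lambda>T. ev T d [2 * x] 1 \<and> ev T d [2 * y + 1] 1)"
    by (intro holds_near_conj ev_holds_near)
  then obtain k where k: "\<forall>T. agree_below k G T \<longrightarrow> ev T d [2 * x] 1 \<and> ev T d [2 * y + 1] 1"
    unfolding holds_near_def by blast
  define E where "E = (G - F) \<inter> {..<k}"
  have agree: "agree_below k (F \<union> E) T \<longleftrightarrow> agree_below k G T" for T
    using \<open>F \<subseteq> G\<close> unfolding agree_below_def E_def by blast
  have "pair_forceable F S d n y"
    unfolding pair_forceable_def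
  proof (intro exI conjI)
    show "finite E" by (simp add: E_def)
    show "E \<subseteq> S" using \<open>G - F \<subseteq> S\<close> by (auto simp: E_def)
    show "n \<le> x" "x < y" using \<open>n \<le> x\<close> \<open>Suc x \<le> y\<close> by simp_all
    show "holds_near (F \<union> E) (\<lambda>T. ev T d [2 * x] 1 \<and> ev T d [2 * y + 1] 1)"
      unfolding holds_near_def using k agree by blast
  qed
  with assms show False by blast
qed

lemma forces_no_spread_if_pair_forceable:
  assumes "pair_forceable (set fl) S d n y" and "y < f n" and "mono f"
  obtains fl' k where "set fl \<subseteq> set fl'" "set fl' - set fl \<subseteq> S"
    "forces_no_spread f d (set fl') {k<..}"
proof -
  obtain E x where E: "finite E" "E \<subseteq> S" and "n \<le> x" "x < y"
    and forced: "holds_near (set fl \<union> E) (\<lambda>T. ev T d [2 * x] 1 \<and> ev T d [2 * y + 1] 1)"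
    using assms(1) unfolding pair_forceable_def by blast
  obtain k where k: "\<forall>T. agree_below k (set fl \<union> E) T \<longrightarrow> ev T d [2 * x] 1 \<and> ev T d [2 * y + 1] 1"
    using forced unfolding holds_near_def by blast
  have "y < f x" using assms(2,3) \<open>n \<le> x\<close> by (meson monoD order_less_le_trans)
  define fl' where "fl' = sorted_list_of_set (set fl \<union> E)"
  have fl': "set fl' = set fl \<union> E" unfolding fl'_def using E(1) by simp
  have "forces_no_spread f d (set fl') {k<..}"
    unfolding forces_no_spread_def
  proof (intro allI impI)
    fix G assume "set fl' \<subseteq> G" "G - set fl' \<subseteq> {k<..}"
    then have "agree_below k (set fl \<union> E) G" unfolding agree_below_def fl' by auto
    then show "\<not> computes_spread_join f d G"
      using k \<open>x < y\<close> \<open>y < f x\<close> close_pair_prevents_spread_join by blast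
  qed
  then show thesis using that fl' E(2) by blast
qed

definition mathias_le :: "nat set \<Rightarrow> nat set \<Rightarrow> nat set \<Rightarrow> nat set \<Rightarrow> bool" where
  "mathias_le F' R' F R \<longleftrightarrow> F \<subseteq> F' \<and> F' - F \<subseteq> R \<and> R' \<subseteq> R"

lemma mathias_le_refl: "mathias_le F R F R"
  unfolding mathias_le_def by blast

lemma mathias_le_trans: "mathias_le F'' R'' F' R' \<Longrightarrow> mathias_le F' R' F R \<Longrightarrow> mathias_le F'' R'' F R"
  unfolding mathias_le_def by auto

lemma mathias_le_insert: "a \<in> R \<Longrightarrow> mathias_le (insert a F) R F R"
  unfolding mathias_le_def by blast

lemma forces_no_spread_mathias_le:
  assumes "forces_no_spread f d F R" and "mathias_le F' R' F R"
  shows "forces_no_spread f d F' R'"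
  unfolding forces_no_spread_def
proof (intro allI impI)
  fix G assume "F' \<subseteq> G" "G - F' \<subseteq> R'"
  with assms(2) have "F \<subseteq> G" "G - F \<subseteq> R" unfolding mathias_le_def by auto
  with assms(1) show "\<not> computes_spread_join f d G" unfolding forces_no_spread_def by blast
qed

lemma mathias_le_chain:
  assumes "\<And>s. mathias_le (F (Suc s)) (R (Suc s)) (F s) (R s)" and "s \<le> t"
  shows "mathias_le (F t) (R t) (F s) (R s)"
  using assms(2)
proof (induction t rule: dec_induct)
  case base
  show ?case by (rule mathias_le_refl)
next
  case (step t)
  show ?case by (rule mathias_le_trans[OF assms(1) step.IH])
qed

lemma forces_no_spread_Union_chain:
  assumes chain: "\<And>s. mathias_le (F (Suc s)) (R (Suc s)) (F s) (R s)"
    and "forces_no_spread f d (F s) (R s)"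
  shows "\<not> computes_spread_join f d (\<Union>t. F t)"
proof -
  have "(\<Union>t. F t) - F s \<subseteq> R s"
  proof
    fix a assume "a \<in> (\<Union>t. F t) - F s"
    then obtain t where "a \<in> F t" "a \<notin> F s" by blast
    moreover have "mathias_le (F (max s t)) (R (max s t)) (F t) (R t)"
      and "mathias_le (F (max s t)) (R (max s t)) (F s) (R s)"
      using mathias_le_chain[of F R, OF chain] by simp_all
    ultimately show "a \<in> R s" unfolding mathias_le_def by blast
  qed
  moreover have "F s \<subseteq> (\<Union>t. F t)" by blast
  ultimately show ?thesis using assms(2) unfolding forces_no_spread_def by blast
qed

section \<open>Reservoirs from a countable family\<close>

definition split_bound ::
  "nat set \<Rightarrow> nat set \<Rightarrow> rf \<Rightarrow> rf \<Rightarrow> nat set \<Rightarrow> nat \<Rightarrow> nat set \<Rightarrow> nat \<Rightarrow> bool" where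
  "split_bound F0 F1 d0 d1 R n P B \<longleftrightarrow>
     (\<exists>y\<le>B. pair_forceable F0 (R \<inter> P) d0 n y \<or> pair_forceable F1 (R - P) d1 n y)"

lemma split_bound_mono: "split_bound F0 F1 d0 d1 R n P B \<Longrightarrow> B \<le> B' \<Longrightarrow> split_bound F0 F1 d0 d1 R n P B'"
  unfolding split_bound_def by (meson order_trans)

lemma agree_below_Int_subset: "agree_below k P P' \<Longrightarrow> S \<inter> P \<inter> {..<k} \<subseteq> S \<inter> P'"
  unfolding agree_below_def by (auto simp: set_eq_iff)

lemma agree_below_Diff_subset: "agree_below k P P' \<Longrightarrow> (S - P) \<inter> {..<k} \<subseteq> S - P'"
  unfolding agree_below_def by (auto simp: set_eq_iff)

lemma split_bound_holds_near:
  assumes "split_bound F0 F1 d0 d1 R n P B"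
  shows "holds_near P (\<lambda>P'. split_bound F0 F1 d0 d1 R n P' B)"
proof -
  obtain y where "y \<le> B"
    and "pair_forceable F0 (R \<inter> P) d0 n y \<or> pair_forceable F1 (R - P) d1 n y"
    using assms unfolding split_bound_def by blast
  then show ?thesis
  proof (elim disjE)
    assume "pair_forceable F0 (R \<inter> P) d0 n y"
    then obtain k where k: "\<And>S'. R \<inter> P \<inter> {..<k} \<subseteq> S' \<Longrightarrow> pair_forceable F0 S' d0 n y"
      using pair_forceable_finite_use by blast
    show ?thesis
      unfolding holds_near_def split_bound_def
      using k[OF agree_below_Int_subset] \<open>y \<le> B\<close> by blast
  next
    assume "pair_forceable F1 (R - P) d1 n y"
    then obtain k where k: "\<And>S'. (R - P) \<inter> {..<k} \<subseteq> S' \<Longrightarrow> pair_forceable F1 S' d1 n y"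
      using pair_forceable_finite_use by blast
    show ?thesis
      unfolding holds_near_def split_bound_def
      using k[OF agree_below_Diff_subset] \<open>y \<le> B\<close> by blast
  qed
qed

text \<open>Reservoirs are indexed by histories. There are only countably many histories, so the single
  function mu below dominates every bound the construction asks about. Split keeps an infinite side
  of a partition of the reservoir admitting no split bound, if there is one.\<close>
datatype hist = Base | Cut nat hist | Split "nat list" "nat list" rf rf nat hist

instance rf :: countable by countable_datatype

instance hist :: countable by countable_datatype

primrec interp :: "hist \<Rightarrow> nat set" where
  "interp Base = UNIV"
| "interp (Cut k h) = interp h \<inter> {k<..}"
| "interp (Split fl0 fl1 d0 d1 n h) =
    (let R = interp h; P = SOME P. \<forall>B. \<not> split_bound (set fl0) (set fl1) d0 d1 R n P B
     in if infinite (R \<inter> P) then R \<inter> P else R - P)"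

lemma infinite_interp_Cut: "infinite (interp h) \<Longrightarrow> infinite (interp (Cut k h))"
proof -
  assume "infinite (interp h)"
  moreover have "interp h \<subseteq> interp (Cut k h) \<union> {..k}" by auto
  ultimately show ?thesis by (meson finite_UnI finite_atMost finite_subset)
qed

text \<open>Meaningful only when some bound exists; otherwise LEAST returns an unspecified value.\<close>
definition split_modulus :: "nat list \<times> nat list \<times> rf \<times> rf \<times> hist \<Rightarrow> nat \<Rightarrow> nat" where
  "split_modulus = (\<lambda>(fl0, fl1, d0, d1, h) n.
     LEAST B. \<forall>P. split_bound (set fl0) (set fl1) d0 d1 (interp h) n P B)"

definition dominating :: "(nat \<Rightarrow> nat \<Rightarrow> nat) \<Rightarrow> nat \<Rightarrow> nat" where
  "dominating g n = (\<Sum>i\<le>n. Suc (\<Sum>j\<le>i. g j i))"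

lemma mono_dominating: "mono (dominating g)"
  unfolding dominating_def by (intro monoI sum_mono2) auto

lemma less_dominating: "j \<le> n \<Longrightarrow> g j n < dominating g n"
proof -
  assume "j \<le> n"
  then have "g j n \<le> (\<Sum>j\<le>n. g j n)" by (intro member_le_sum) auto
  also have "\<dots> < Suc (\<Sum>j\<le>n. g j n)" by simp
  also have "\<dots> \<le> dominating g n"
    unfolding dominating_def by (rule member_le_sum[where f = "\<lambda>i. Suc (\<Sum>j\<le>i. g j i)"]) auto
  finally show ?thesis .
qed

definition mu :: "nat \<Rightarrow> nat" where
  "mu = dominating (\<lambda>j. split_modulus (from_nat j))"

lemma mono_mu: "mono mu"
  unfolding mu_def by (rule mono_dominating)

lemma split_modulus_less_mu: "split_modulus key (to_nat key) < mu (to_nat key)"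
  using less_dominating[of "to_nat key" "to_nat key" "\<lambda>j. split_modulus (from_nat j)"]
  by (simp add: mu_def)

section \<open>Deciding one pair of requirements\<close>

record condition =
  fin0 :: "nat list"
  fin1 :: "nat list"
  res :: hist

text \<open>A condition is a pair of Mathias conditions with common reservoir, for generic sets inside C0
  and inside C1. Only one of the two requirements d0 for the first and d1 for the second set need
  be met; as every pair (d0, d1) is decided, one of the two sets meets all of its requirements.\<close>
definition decides_pair :: "nat set \<Rightarrow> nat set \<Rightarrow> rf \<Rightarrow> rf \<Rightarrow> condition \<Rightarrow> condition \<Rightarrow> bool" where
  "decides_pair C0 C1 d0 d1 c c' \<longleftrightarrow> infinite (interp (res c')) \<and>
     mathias_le (set (fin0 c')) (interp (res c')) (set (fin0 c)) (interp (res c)) \<and>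
     set (fin0 c') \<subseteq> set (fin0 c) \<union> C0 \<and>
     mathias_le (set (fin1 c')) (interp (res c')) (set (fin1 c)) (interp (res c)) \<and>
     set (fin1 c') \<subseteq> set (fin1 c) \<union> C1 \<and>
     (forces_no_spread mu d0 (set (fin0 c')) (interp (res c')) \<or>
      forces_no_spread mu d1 (set (fin1 c')) (interp (res c')))"

lemma mathias_le_shrink: "R' \<subseteq> R \<Longrightarrow> mathias_le F R' F R"
  unfolding mathias_le_def by blast

lemma cut_extension:
  assumes "pair_forceable (set fl) S d n y" and "y < mu n" and "S \<subseteq> interp h"
  obtains fl' k where "mathias_le (set fl') (interp (Cut k h)) (set fl) (interp h)"
    "set fl' \<subseteq> set fl \<union> S" "forces_no_spread mu d (set fl') (interp (Cut k h))"
proof -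
  obtain fl' k where fl': "set fl \<subseteq> set fl'" "set fl' - set fl \<subseteq> S"
    and no_spread: "forces_no_spread mu d (set fl') {k<..}"
    using forces_no_spread_if_pair_forceable[OF assms(1,2) mono_mu] .
  show thesis
  proof (rule that)
    show "mathias_le (set fl') (interp (Cut k h)) (set fl) (interp h)"
      using fl' assms(3) unfolding mathias_le_def by auto
    show "set fl' \<subseteq> set fl \<union> S" using fl' by blast
    show "forces_no_spread mu d (set fl') (interp (Cut k h))"
      using no_spread by (rule forces_no_spread_mathias_le) (auto intro: mathias_le_shrink)
  qed
qed

lemma decides_pair_if_bounded:
  fixes c :: condition and d0 d1 :: rf
  defines "n \<equiv> to_nat (fin0 c, fin1 c, d0, d1, res c)"
  assumes bounded: "\<exists>B. \<forall>P. split_bound (set (fin0 c)) (set (fin1 c)) d0 d1 (interp (res c)) n P B"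
    and inf: "infinite (interp (res c))" and cover: "interp (res c) \<subseteq> C0 \<union> C1"
  shows "\<exists>c'. decides_pair C0 C1 d0 d1 c c'"
proof -
  let ?R = "interp (res c)"
  define B where "B = split_modulus (fin0 c, fin1 c, d0, d1, res c) n"
  have "\<forall>P. split_bound (set (fin0 c)) (set (fin1 c)) d0 d1 ?R n P B"
    using LeastI_ex[OF bounded] unfolding B_def split_modulus_def by simp
  moreover have "B < mu n"
    unfolding B_def n_def by (rule split_modulus_less_mu)
  ultimately obtain y where "y < mu n" and
    "pair_forceable (set (fin0 c)) (?R \<inter> C0) d0 n y \<or> pair_forceable (set (fin1 c)) (?R - C0) d1 n y"
    unfolding split_bound_def by (meson le_less_trans)
  moreover have cut: "infinite (interp (Cut k (res c)))" "interp (Cut k (res c)) \<subseteq> ?R" for k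
    using infinite_interp_Cut[OF inf] by auto
  ultimately show ?thesis
  proof (elim disjE)
    assume "pair_forceable (set (fin0 c)) (?R \<inter> C0) d0 n y"
    then obtain fl k where "mathias_le (set fl) (interp (Cut k (res c))) (set (fin0 c)) ?R"
      "set fl \<subseteq> set (fin0 c) \<union> ?R \<inter> C0" "forces_no_spread mu d0 (set fl) (interp (Cut k (res c)))"
      using cut_extension \<open>y < mu n\<close> by blast
    then have "decides_pair C0 C1 d0 d1 c \<lparr>fin0 = fl, fin1 = fin1 c, res = Cut k (res c)\<rparr>"
      unfolding decides_pair_def using cut mathias_le_shrink by auto
    then show ?thesis by blast
  next
    assume "pair_forceable (set (fin1 c)) (?R - C0) d1 n y"
    then obtain fl k where "mathias_le (set fl) (interp (Cut k (res c))) (set (fin1 c)) ?R"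
      "set fl \<subseteq> set (fin1 c) \<union> (?R - C0)" "forces_no_spread mu d1 (set fl) (interp (Cut k (res c)))"
      using cut_extension \<open>y < mu n\<close> by blast
    moreover have "set (fin1 c) \<union> (?R - C0) \<subseteq> set (fin1 c) \<union> C1" using cover by blast
    ultimately have "decides_pair C0 C1 d0 d1 c \<lparr>fin0 = fin0 c, fin1 = fl, res = Cut k (res c)\<rparr>"
      unfolding decides_pair_def using cut mathias_le_shrink by auto
    then show ?thesis by blast
  qed
qed

lemma decides_pair_if_unbounded:
  fixes c :: condition and d0 d1 :: rf
  defines "n \<equiv> to_nat (fin0 c, fin1 c, d0, d1, res c)"
  assumes unbounded: "\<nexists>B. \<forall>P. split_bound (set (fin0 c)) (set (fin1 c)) d0 d1 (interp (res c)) n P B"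
    and "infinite (interp (res c))"
  shows "\<exists>c'. decides_pair C0 C1 d0 d1 c c'"
proof -
  let ?R = "interp (res c)"
  let ?no_bound = "\<lambda>P. \<forall>B. \<not> split_bound (set (fin0 c)) (set (fin1 c)) d0 d1 ?R n P B"
  have "\<exists>P. ?no_bound P"
  proof (rule ccontr)
    assume "\<nexists>P. ?no_bound P"
    then have "\<exists>B. \<forall>P. split_bound (set (fin0 c)) (set (fin1 c)) d0 d1 ?R n P B"
      by (intro uniform_bound_by_compactness)
        (auto intro: split_bound_mono split_bound_holds_near)
    with unbounded show False by blast
  qed
  then have P: "?no_bound (SOME P. ?no_bound P)" by (rule someI_ex)
  define P where "P = (SOME P. ?no_bound P)"
  define h where "h = Split (fin0 c) (fin1 c) d0 d1 n (res c)"
  have h: "interp h = (if infinite (?R \<inter> P) then ?R \<inter> P else ?R - P)"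
    unfolding h_def P_def by (simp add: Let_def)
  have "infinite (interp h)"
    using \<open>infinite ?R\<close> unfolding h by (metis Int_Diff_Un finite_UnI)
  moreover have "forces_no_spread mu d0 (set (fin0 c)) (interp h) \<or>
      forces_no_spread mu d1 (set (fin1 c)) (interp h)"
  proof -
    have "\<not> pair_forceable (set (fin0 c)) (?R \<inter> P) d0 n y"
      and "\<not> pair_forceable (set (fin1 c)) (?R - P) d1 n y" for y
      using P[unfolded P_def[symmetric], rule_format, of y] unfolding split_bound_def by auto
    then have "forces_no_spread mu d0 (set (fin0 c)) (?R \<inter> P)"
      and "forces_no_spread mu d1 (set (fin1 c)) (?R - P)"
      by (blast intro: forces_no_spread_if_no_pair_forceable)+
    then show ?thesis unfolding h by simp
  qed
  moreover have "interp h \<subseteq> ?R" unfolding h by auto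
  ultimately have "decides_pair C0 C1 d0 d1 c \<lparr>fin0 = fin0 c, fin1 = fin1 c, res = h\<rparr>"
    unfolding decides_pair_def mathias_le_def by simp
  then show ?thesis by blast
qed

lemma decides_pair_exists:
  assumes "infinite (interp (res c))" and "interp (res c) \<subseteq> C0 \<union> C1"
  shows "\<exists>c'. decides_pair C0 C1 d0 d1 c c'"
proof (cases "\<exists>B. \<forall>P. split_bound (set (fin0 c)) (set (fin1 c)) d0 d1 (interp (res c))
    (to_nat (fin0 c, fin1 c, d0, d1, res c)) P B")
  case True
  then show ?thesis using decides_pair_if_bounded assms by blast
next
  case False
  then show ?thesis using decides_pair_if_unbounded assms(1) by blast
qed

section \<open>The generic sets\<close>

lemma decides_pair_insert:
  assumes dec: "decides_pair C0 C1 d0 d1 c c'"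
    and a0: "a0 \<in> interp (res c') \<inter> C0" and a1: "a1 \<in> interp (res c') \<inter> C1"
  shows "decides_pair C0 C1 d0 d1 c (c'\<lparr>fin0 := a0 # fin0 c', fin1 := a1 # fin1 c'\<rparr>)"
proof -
  let ?R = "interp (res c')"
  have m0: "mathias_le (insert a0 (set (fin0 c'))) ?R (set (fin0 c')) ?R"
    and m1: "mathias_le (insert a1 (set (fin1 c'))) ?R (set (fin1 c')) ?R"
    using a0 a1 by (simp_all add: mathias_le_insert)
  have "mathias_le (insert a0 (set (fin0 c'))) ?R (set (fin0 c)) (interp (res c))"
    and "mathias_le (insert a1 (set (fin1 c'))) ?R (set (fin1 c)) (interp (res c))"
    using mathias_le_trans[OF m0] mathias_le_trans[OF m1] dec unfolding decides_pair_def by blast+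
  moreover have "forces_no_spread mu d0 (insert a0 (set (fin0 c'))) ?R \<or>
      forces_no_spread mu d1 (insert a1 (set (fin1 c'))) ?R"
    using forces_no_spread_mathias_le[OF _ m0] forces_no_spread_mathias_le[OF _ m1] dec
    unfolding decides_pair_def by blast
  moreover have "insert a0 (set (fin0 c')) \<subseteq> set (fin0 c) \<union> C0"
    and "insert a1 (set (fin1 c')) \<subseteq> set (fin1 c) \<union> C1"
    using a0 a1 dec unfolding decides_pair_def by blast+
  ultimately show ?thesis
    using dec unfolding decides_pair_def by simp
qed

definition admissible :: "hist \<Rightarrow> nat set \<Rightarrow> nat set \<Rightarrow> condition \<Rightarrow> bool" where
  "admissible h0 C0 C1 c \<longleftrightarrow> infinite (interp (res c)) \<and> interp (res c) \<subseteq> interp h0 \<and>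
     set (fin0 c) \<subseteq> C0 \<and> set (fin1 c) \<subseteq> C1"

definition reaches :: "nat \<Rightarrow> condition \<Rightarrow> bool" where
  "reaches s c \<longleftrightarrow> (\<exists>a\<in>set (fin0 c). s \<le> a) \<and> (\<exists>a\<in>set (fin1 c). s \<le> a)"

lemma admissible_step:
  assumes cover: "interp h0 \<subseteq> C0 \<union> C1"
    and dense: "\<And>h. infinite (interp h) \<Longrightarrow> interp h \<subseteq> interp h0 \<Longrightarrow>
      infinite (interp h \<inter> C0) \<and> infinite (interp h \<inter> C1)"
    and adm: "admissible h0 C0 C1 c"
  shows "\<exists>c'. admissible h0 C0 C1 c' \<and> decides_pair C0 C1 d0 d1 c c' \<and> reaches s c'"
proof -
  from adm have "infinite (interp (res c))" and "interp (res c) \<subseteq> C0 \<union> C1"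
    using cover unfolding admissible_def by auto
  then obtain c' where dec: "decides_pair C0 C1 d0 d1 c c'"
    using decides_pair_exists by blast
  then have "infinite (interp (res c'))" and "interp (res c') \<subseteq> interp h0"
    using adm unfolding decides_pair_def mathias_le_def admissible_def by auto
  then have "infinite (interp (res c') \<inter> C0)" and "infinite (interp (res c') \<inter> C1)"
    using dense by blast+
  then obtain a0 a1 where a0: "a0 \<in> interp (res c') \<inter> C0" "s \<le> a0"
    and a1: "a1 \<in> interp (res c') \<inter> C1" "s \<le> a1"
    by (meson infinite_nat_iff_unbounded_le)
  define c'' where "c'' = c'\<lparr>fin0 := a0 # fin0 c', fin1 := a1 # fin1 c'\<rparr>"
  have "decides_pair C0 C1 d0 d1 c c''"
    unfolding c''_def using decides_pair_insert[OF dec a0(1) a1(1)] .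
  moreover have "admissible h0 C0 C1 c''"
    using \<open>infinite (interp (res c'))\<close> \<open>interp (res c') \<subseteq> interp h0\<close> dec adm a0 a1
    unfolding admissible_def decides_pair_def c''_def by auto
  moreover have "reaches s c''"
    unfolding reaches_def c''_def using a0 a1 by auto
  ultimately show ?thesis by blast
qed

lemma generic_pair:
  assumes start: "infinite (interp h0)" and cover: "interp h0 \<subseteq> C0 \<union> C1"
    and dense: "\<And>h. infinite (interp h) \<Longrightarrow> interp h \<subseteq> interp h0 \<Longrightarrow>
      infinite (interp h \<inter> C0) \<and> infinite (interp h \<inter> C1)"
  obtains G0 G1 where "infinite G0" "G0 \<subseteq> C0" "infinite G1" "G1 \<subseteq> C1"
    "\<And>d0 d1. \<not> computes_spread_join mu d0 G0 \<or> \<not> computes_spread_join mu d1 G1"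
proof -
  define req :: "nat \<Rightarrow> rf \<times> rf" where "req = from_nat"
  have "\<exists>c. \<forall>s. admissible h0 C0 C1 (c s) \<and>
      decides_pair C0 C1 (fst (req s)) (snd (req s)) (c s) (c (Suc s)) \<and> reaches s (c (Suc s))"
  proof (rule dependent_nat_choice)
    show "\<exists>c. admissible h0 C0 C1 c"
      using start by (intro exI[of _ "\<lparr>fin0 = [], fin1 = [], res = h0\<rparr>"]) (simp add: admissible_def)
  qed (use admissible_step[OF cover dense] in blast)
  then obtain c where adm: "\<And>s. admissible h0 C0 C1 (c s)"
    and dec: "\<And>s. decides_pair C0 C1 (fst (req s)) (snd (req s)) (c s) (c (Suc s))"
    and reach: "\<And>s. reaches s (c (Suc s))"
    by blast
  define F0 F1 R where "F0 s = set (fin0 (c s))" and "F1 s = set (fin1 (c s))"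
    and "R s = interp (res (c s))" for s
  have chain0: "mathias_le (F0 (Suc s)) (R (Suc s)) (F0 s) (R s)"
    and chain1: "mathias_le (F1 (Suc s)) (R (Suc s)) (F1 s) (R s)" for s
    using dec[of s] unfolding decides_pair_def F0_def F1_def R_def by blast+
  show thesis
  proof (rule that[of "\<Union>s. F0 s" "\<Union>s. F1 s"])
    show "infinite (\<Union>s. F0 s)" "infinite (\<Union>s. F1 s)"
      using reach unfolding infinite_nat_iff_unbounded_le reaches_def F0_def F1_def by blast+
    show "(\<Union>s. F0 s) \<subseteq> C0" "(\<Union>s. F1 s) \<subseteq> C1"
      using adm unfolding admissible_def F0_def F1_def by blast+
    fix d0 d1 :: rf
    define s where "s = to_nat (d0, d1)"
    have "req s = (d0, d1)" unfolding req_def s_def by simp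
    then have "forces_no_spread mu d0 (F0 (Suc s)) (R (Suc s)) \<or>
        forces_no_spread mu d1 (F1 (Suc s)) (R (Suc s))"
      using dec[of s] unfolding decides_pair_def F0_def F1_def R_def by simp
    then show "\<not> computes_spread_join mu d0 (\<Union>s. F0 s) \<or> \<not> computes_spread_join mu d1 (\<Union>s. F1 s)"
      using forces_no_spread_Union_chain[of F0 R, OF chain0]
        forces_no_spread_Union_chain[of F1 R, OF chain1] by blast
  qed
qed

lemma spread_avoiding_subset:
  assumes "infinite (interp h0)" and "interp h0 \<subseteq> C0 \<union> C1"
    and "\<And>h. infinite (interp h) \<Longrightarrow> interp h \<subseteq> interp h0 \<Longrightarrow>
      infinite (interp h \<inter> C0) \<and> infinite (interp h \<inter> C1)"
  shows "\<exists>G. infinite G \<and> (G \<subseteq> C0 \<or> G \<subseteq> C1) \<and> (\<forall>d. \<not> computes_spread_join mu d G)"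
proof -
  obtain G0 G1 where "infinite G0" "G0 \<subseteq> C0" "infinite G1" "G1 \<subseteq> C1"
    and either: "\<And>d0 d1. \<not> computes_spread_join mu d0 G0 \<or> \<not> computes_spread_join mu d1 G1"
    using generic_pair[OF assms] by blast
  show ?thesis
  proof (cases "\<forall>d. \<not> computes_spread_join mu d G0")
    case True
    with \<open>infinite G0\<close> \<open>G0 \<subseteq> C0\<close> show ?thesis by blast
  next
    case False
    then obtain d0 where "computes_spread_join mu d0 G0" by blast
    then have "\<forall>d. \<not> computes_spread_join mu d G1" using either by blast
    with \<open>infinite G1\<close> \<open>G1 \<subseteq> C1\<close> show ?thesis by blast
  qed
qed

lemma spread_avoiding_subset_reservoir:
  assumes "infinite (interp h0)" and "interp h0 \<subseteq> C"
  shows "\<exists>G. infinite G \<and> G \<subseteq> C \<and> (\<forall>d. \<not> computes_spread_join mu d G)"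
proof -
  have "\<exists>G. infinite G \<and> (G \<subseteq> C \<or> G \<subseteq> C) \<and> (\<forall>d. \<not> computes_spread_join mu d G)"
  proof (rule spread_avoiding_subset)
    show "interp h0 \<subseteq> C \<union> C" using assms(2) by blast
    show "infinite (interp h \<inter> C) \<and> infinite (interp h \<inter> C)"
      if "infinite (interp h)" and "interp h \<subseteq> interp h0" for h
    proof -
      have "interp h \<inter> C = interp h" using that(2) assms(2) by blast
      then show ?thesis using that(1) by simp
    qed
  qed (fact assms(1))
  then show ?thesis by blast
qed

lemma Cut_avoids_finite_part:
  assumes "finite (interp h \<inter> A)"
  obtains m where "interp (Cut m h) \<subseteq> - A"
proof -
  obtain m where m: "\<forall>x\<in>interp h \<inter> A. x \<le> m"
    using assms finite_nat_set_iff_bounded_le by blast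
  have "interp (Cut m h) \<subseteq> - A"
  proof
    fix x assume "x \<in> interp (Cut m h)"
    then have "x \<in> interp h" and "m < x" by auto
    show "x \<in> - A"
    proof
      assume "x \<in> A"
      with m \<open>x \<in> interp h\<close> have "x \<le> m" by blast
      with \<open>m < x\<close> show False by simp
    qed
  qed
  then show thesis by (rule that)
qed

text \<open>Either every reservoir of the family meets both colours of p infinitely often, and the
  two generic sets are built inside the two colours, or some reservoir is eventually monochromatic
  and both generic sets are built inside it.\<close>
lemma limit_homogeneous_avoiding_spread:
  fixes p :: "nat \<Rightarrow> bool"
  obtains G b where "infinite G" "\<forall>x\<in>G. p x = b" "\<forall>d. \<not> computes_spread_join mu d G"
proof (cases "\<forall>h. infinite (interp h) \<longrightarrow>
    infinite (interp h \<inter> {x. p x = False}) \<and> infinite (interp h \<inter> {x. p x = True})")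
  case True
  have "\<exists>G. infinite G \<and> (G \<subseteq> {x. p x = False} \<or> G \<subseteq> {x. p x = True}) \<and>
      (\<forall>d. \<not> computes_spread_join mu d G)"
  proof (rule spread_avoiding_subset[of Base])
    show "interp Base \<subseteq> {x. p x = False} \<union> {x. p x = True}" by auto
    show "infinite (interp h \<inter> {x. p x = False}) \<and> infinite (interp h \<inter> {x. p x = True})"
      if "infinite (interp h)" for h
      using True that by blast
  qed simp
  then obtain G where G: "infinite G" "\<forall>d. \<not> computes_spread_join mu d G"
    and "G \<subseteq> {x. p x = False} \<or> G \<subseteq> {x. p x = True}"
    by blast
  then consider "G \<subseteq> {x. p x = False}" | "G \<subseteq> {x. p x = True}" by blast
  then show thesis
  proof cases
    case 1
    then show thesis using that[of G False] G by auto
  next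
    case 2
    then show thesis using that[of G True] G by auto
  qed
next
  case False
  then obtain h where "infinite (interp h)"
    and "finite (interp h \<inter> {x. p x = False}) \<or> finite (interp h \<inter> {x. p x = True})"
    by blast
  then obtain b where "finite (interp h \<inter> {x. p x = b})" by blast
  then obtain m where sub: "interp (Cut m h) \<subseteq> - {x. p x = b}"
    by (rule Cut_avoids_finite_part)
  have inf: "infinite (interp (Cut m h))"
    using infinite_interp_Cut[OF \<open>infinite (interp h)\<close>] .
  obtain G where "infinite G" "G \<subseteq> - {x. p x = b}"
    and "\<forall>d. \<not> computes_spread_join mu d G"
    using spread_avoiding_subset_reservoir[OF inf sub] by blast
  then show thesis using that[of G "\<not> b"] by auto
qed

section \<open>The instance of SIPT22 without a solution\<close>

definition spread_coloring :: "nat set" where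
  "spread_coloring = {prod_encode (x, y) | x y. x < y \<and> mu x \<le> y}"

lemma col_of_spread_coloring: "col_of spread_coloring x y \<longleftrightarrow> x < y \<and> mu x \<le> y"
  unfolding col_of_def spread_coloring_def by (auto simp: prod_encode_eq)

lemma stable_instance_spread_coloring: "stable_instance spread_coloring"
  unfolding stable_instance_def coloring_code_def stable_def
proof
  show "spread_coloring \<subseteq> {prod_encode (x, y) |x y. x < y}"
    unfolding spread_coloring_def by blast
  show "\<forall>x. \<exists>b. \<forall>\<^sub>F u in sequentially. col_of spread_coloring x u = b"
  proof
    fix x
    have "\<forall>\<^sub>F u in sequentially. col_of spread_coloring x u = True"
      unfolding eventually_sequentially col_of_spread_coloring
      by (intro exI[of _ "Suc x + mu x"]) auto
    then show "\<exists>b. \<forall>\<^sub>F u in sequentially. col_of spread_coloring x u = b" by blast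
  qed
qed

lemma computes_spread_join_if_SIPT22_sol:
  assumes "SIPT22_sol spread_coloring Y" and "turing_le Y G"
  shows "\<exists>d. computes_spread_join mu d G"
proof -
  obtain HL HR b where Y: "Y = join HL HR" and "infinite HL" "infinite HR"
    and hom: "\<forall>x\<in>HL. \<forall>y\<in>HR. x < y \<longrightarrow> col_of spread_coloring x y = b"
    using assms(1) unfolding SIPT22_sol_def incr_p_homogeneous_def by blast
  obtain x where "x \<in> HL"
    using \<open>infinite HL\<close> infinite_imp_nonempty by blast
  moreover obtain y where "y \<in> HR" and "Suc x + mu x \<le> y"
    using \<open>infinite HR\<close> infinite_nat_iff_unbounded_le by blast
  moreover from \<open>Suc x + mu x \<le> y\<close> have "x < y" and "col_of spread_coloring x y"
    by (simp_all add: col_of_spread_coloring)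
  ultimately have b using hom by blast
  then have "\<forall>x\<in>HL. \<forall>y\<in>HR. x < y \<longrightarrow> mu x \<le> y"
    using hom by (auto simp: col_of_spread_coloring)
  then show ?thesis
    using assms(2) \<open>infinite HL\<close> \<open>infinite HR\<close>
    unfolding computes_spread_join_def turing_le_def Y by blast
qed

theorem theorem1p7:
  shows "\<not> sc_reducible stable_instance SIPT22_sol stable_instance D22_sol"
proof
  assume "sc_reducible stable_instance SIPT22_sol stable_instance D22_sol"
  then obtain Xh where "stable_instance Xh"
    and red: "\<forall>Yh. D22_sol Xh Yh \<longrightarrow> (\<exists>Y. turing_le Y Yh \<and> SIPT22_sol spread_coloring Y)"
    unfolding sc_reducible_def using stable_instance_spread_coloring by blast
  then have "\<exists>p. \<forall>x. \<forall>\<^sub>F u in sequentially. col_of Xh x u = p x"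
    unfolding stable_instance_def stable_def by (intro choice) blast
  then obtain p where lim: "\<And>x. \<forall>\<^sub>F u in sequentially. col_of Xh x u = p x"
    by blast
  obtain G b where "infinite G" and hom: "\<forall>x\<in>G. p x = b"
    and G: "\<forall>d. \<not> computes_spread_join mu d G"
    by (rule limit_homogeneous_avoiding_spread)
  have "\<forall>\<^sub>F u in sequentially. col_of Xh x u = b" if "x \<in> G" for x
    using lim[of x] hom that by simp
  with \<open>infinite G\<close> have "D22_sol Xh G"
    unfolding D22_sol_def limit_homogeneous_def by blast
  with red obtain Y where "turing_le Y G" and "SIPT22_sol spread_coloring Y"
    by blast
  then obtain d where "computes_spread_join mu d G"
    using computes_spread_join_if_SIPT22_sol by blast
  with G show False by blast
qed

end
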